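(* Let $2\le n\le\infty$, $r\ge0$ and let $A$ be an $n$-multicomplex. Then $E_{r+1}(C_r\otimes A)=0$.
   Context: Throughout, $R$ is a commutative unital ring. For $1\le n\le\infty$, an $n$-multicomplex is a $\mathbb Z\times\mathbb Z$-bigraded $R$-module $A=\{A^{p,q}\}$ with $R$-linear maps $d_i\colon A\to A$ ($i\ge0$) of bidegree $(-i,1-i)$ such that $\sum_{i+j=l}(-1)^id_id_j=0$ for all $l\ge0$, and $d_i=0$ for all $i\ge n$. A $2$-multicomplex is a bicomplex; any $n$-multicomplex is regarded as an $l$-multicomplex for $l\ge n$. Tensor product: $(A\otimes B)^{p,q}=\bigoplus_{p_1+p_2=p,\,q_1+q_2=q}A^{p_1,q_1}\otimes_RB^{p_2,q_2}$ with $d_i(a\otimes b)=d_ia\otimes b+(-1)^{\langle(-i,1-i),(a_1,a_2)\rangle}a\otimes d_ib$ for $a$ of bidegree $(a_1,a_2)$, where $\langle(x_1,x_2),(y_1,y_2)\rangle=x_1y_1+x_2y_2$. $C_r$ is the bicomplex $\mathcal ZW^2_r(0,0)$: for $r=0$ it is the free bicomplex on one generator $a_0$ in bidegree $(0,0)$ (free $R$-module on $a_0,d_0a_0,d_1a_0,d_0d_1a_0$); for $r\ge1$ it is the free $R$-module with basis $\beta_{-k,-k}$, $\beta_{-k-1,-k}$ ($0\le k\le r-1$; $\beta_{u,v}$ in bidegree $(u,v)$), with $d_1\beta_{-k,-k}=\beta_{-k-1,-k}$ for $0\le k\le r-1$, $d_0\beta_{-k,-k}=\beta_{-k,-k+1}$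 for $1\le k\le r-1$, and all other structure maps zero (a staircase with $r$ horizontal steps). Spectral sequence: $Z_0^{p,q}(A)=A^{p,q}$; for $r\ge1$, $Z_r^{p,q}(A)$ is the set of $a_0\in A^{p,q}$ for which there exist $a_j\in A^{p-j,q-j}$ ($1\le j\le r-1$) with $\sum_{i+j=l}(-1)^id_ia_j=0$ for $0\le l\le r-1$. $B_0=0$, $B_1^{p,q}(A)=A^{p,q}\cap\operatorname{im}d_0$, and for $r\ge2$, $B_r^{p,q}(A)$ is the set of $x\in A^{p,q}$ for which there exist $b_i\in A^{p+r-1-i,q+r-2-i}$ ($0\le i\le r-1$) with $x=\sum_{i=0}^{r-1}(-1)^id_ib_{r-1-i}$ and $\sum_{i=0}^l(-1)^id_ib_{l-i}=0$ for $0\le l\le r-2$. $E_r^{p,q}(A)=Z_r^{p,q}(A)/B_r^{p,q}(A)$; this is the spectral sequence of the column-filtered total complex. *)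

theory Defs
  imports Main "HOL-Library.Extended_Nat" "HOL-Library.Function_Algebras"
begin

(* Representation of a bigraded R-module: an ambient R-module (type 'b with scalar
   action scale of a commutative ring type 'r) together with a family of submodules
   A (p,q) playing the role of the homogeneous pieces A^{p,q}.  The structure maps
   are given degree-wise: d i (p,q) : A^{p,q} -> A^{p-i,q+1-i}. *)

definition sgnd :: "nat \<Rightarrow> 'b::ab_group_add \<Rightarrow> 'b" where
  "sgnd i x = (if even i then x else - x)"

definition shift :: "nat \<Rightarrow> int \<times> int \<Rightarrow> int \<times> int" where
  "shift i pq = (fst pq - int i, snd pq + 1 - int i)"

definition multicomplex ::
  "('r::comm_ring_1 \<Rightarrow> 'b::ab_group_add \<Rightarrow> 'b) \<Rightarrow> enat \<Rightarrow> (int \<times> int \<Rightarrow> 'b set)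
     \<Rightarrow> (nat \<Rightarrow> int \<times> int \<Rightarrow> 'b \<Rightarrow> 'b) \<Rightarrow> bool" where
  "multicomplex scale n A d \<longleftrightarrow>
     module scale \<and>
     (\<forall>pq. module.subspace scale (A pq)) \<and>
     (\<forall>i pq. \<forall>x\<in>A pq. d i pq x \<in> A (shift i pq)) \<and>
     (\<forall>i pq. \<forall>x\<in>A pq. \<forall>y\<in>A pq. d i pq (x + y) = d i pq x + d i pq y) \<and>
     (\<forall>i pq c. \<forall>x\<in>A pq. d i pq (scale c x) = scale c (d i pq x)) \<and>
     (\<forall>l pq. \<forall>x\<in>A pq.
        (\<Sum>i\<le>l. sgnd i (d i (shift (l - i) pq) (d (l - i) pq x))) = 0) \<and>
     (\<forall>i pq. n \<le> enat i \<longrightarrow> (\<forall>x\<in>A pq. d i pq x = 0))"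

definition Zs :: "(int \<times> int \<Rightarrow> 'b::ab_group_add set) \<Rightarrow> (nat \<Rightarrow> int \<times> int \<Rightarrow> 'b \<Rightarrow> 'b)
                  \<Rightarrow> nat \<Rightarrow> int \<Rightarrow> int \<Rightarrow> 'b set" where
  "Zs A d r p q =
    (if r = 0 then A (p, q)
     else {a0 \<in> A (p, q). \<exists>a :: nat \<Rightarrow> 'b. a 0 = a0 \<and>
            (\<forall>j\<in>{1..r-1}. a j \<in> A (p - int j, q - int j)) \<and>
            (\<forall>l\<le>r-1. (\<Sum>j\<le>l. sgnd (l - j) (d (l - j) (p - int j, q - int j) (a j))) = 0)})"

(* bidegree of b_k in the definition of B_r^{p,q} *)
definition bdeg :: "int \<Rightarrow> int \<Rightarrow> nat \<Rightarrow> nat \<Rightarrow> int \<times> int" where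
  "bdeg p q r k = (p + int r - 1 - int k, q + int r - 2 - int k)"

definition Bs :: "(int \<times> int \<Rightarrow> 'b::ab_group_add set) \<Rightarrow> (nat \<Rightarrow> int \<times> int \<Rightarrow> 'b \<Rightarrow> 'b)
                  \<Rightarrow> nat \<Rightarrow> int \<Rightarrow> int \<Rightarrow> 'b set" where
  "Bs A d r p q =
    (if r = 0 then {0}
     else if r = 1 then {x \<in> A (p, q). \<exists>b\<in>A (p, q - 1). x = d 0 (p, q - 1) b}
     else {x \<in> A (p, q). \<exists>b :: nat \<Rightarrow> 'b.
             (\<forall>i\<le>r-1. b i \<in> A (bdeg p q r i)) \<and>
             x = (\<Sum>i\<le>r-1. sgnd i (d i (bdeg p q r (r - 1 - i)) (b (r - 1 - i)))) \<and>
             (\<forall>l\<le>r-2. (\<Sum>i\<le>l. sgnd i (d i (bdeg p q r (l - i)) (b (l - i)))) = 0)})"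

(* E_r(A) = 0, i.e. Z_r^{p,q} = B_r^{p,q} for all (p,q) *)
definition E_vanishes :: "(int \<times> int \<Rightarrow> 'b::ab_group_add set) \<Rightarrow> (nat \<Rightarrow> int \<times> int \<Rightarrow> 'b \<Rightarrow> 'b)
                  \<Rightarrow> nat \<Rightarrow> bool" where
  "E_vanishes A d r \<longleftrightarrow> (\<forall>p q. Zs A d r p q = Bs A d r p q)"

(* It is free with at most one basis element in each bidegree,
   so basis elements are indexed by their bidegree.  Cbasis r is the set of bidegrees
   of basis elements; Cedge r i s means d_i e_s = e_{s + (-i,1-i)}, and
   d_i e_s = 0 otherwise (all nonzero structure constants are 1).
   For r = 0 the basis is a0 (0,0), d0 a0 (0,1), d1 a0 (-1,0), d0 d1 a0 = d1 d0 a0 (-1,1). *)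
definition Cbasis :: "nat \<Rightarrow> (int \<times> int) set" where
  "Cbasis r =
    (if r = 0 then {(0,0), (0,1), (-1,0), (-1,1)}
     else {(-k, -k) | k. 0 \<le> k \<and> k \<le> int r - 1} \<union> {(-k-1, -k) | k. 0 \<le> k \<and> k \<le> int r - 1})"

definition Cedge :: "nat \<Rightarrow> nat \<Rightarrow> int \<times> int \<Rightarrow> bool" where
  "Cedge r i s =
    (if r = 0 then
       (i = 0 \<and> (s = (0,0) \<or> s = (-1,0))) \<or>
       (i = 1 \<and> (s = (0,0) \<or> s = (0,1)))
     else
       (i = 1 \<and> (\<exists>k. 0 \<le> k \<and> k \<le> int r - 1 \<and> s = (-k, -k))) \<or>
       (i = 0 \<and> (\<exists>k. 1 \<le> k \<and> k \<le> int r - 1 \<and> s = (-k, -k))))"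

(* The tensor product C_r \<otimes> A, using that C_r is free on Cbasis r:
   an element of (C_r \<otimes> A)^{p,q} is  sum_s e_s \<otimes> x(s)  with x(s) \<in> A^{(p,q)-s}. *)
definition TA :: "nat \<Rightarrow> (int \<times> int \<Rightarrow> 'b::ab_group_add set) \<Rightarrow> int \<times> int \<Rightarrow> (int \<times> int \<Rightarrow> 'b) set" where
  "TA r A pq = {x. \<forall>s. (s \<in> Cbasis r \<longrightarrow> x s \<in> A (fst pq - fst s, snd pq - snd s)) \<and>
                        (s \<notin> Cbasis r \<longrightarrow> x s = 0)}"

(* d_i (e_s \<otimes> a) = d_i e_s \<otimes> a + (-1)^{<(-i,1-i),s>} e_s \<otimes> d_i a *)
definition Td :: "nat \<Rightarrow> (nat \<Rightarrow> int \<times> int \<Rightarrow> 'b::ab_group_add \<Rightarrow> 'b)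
                   \<Rightarrow> nat \<Rightarrow> int \<times> int \<Rightarrow> (int \<times> int \<Rightarrow> 'b) \<Rightarrow> (int \<times> int \<Rightarrow> 'b)" where
  "Td r d i pq x = (\<lambda>t.
     if t \<in> Cbasis r then
       (let s = (fst t + int i, snd t - 1 + int i) in
          (if Cedge r i s then x s else 0))
       + (if even (- int i * fst t + (1 - int i) * snd t)
          then d i (fst pq - fst t, snd pq - snd t) (x t)
          else - d i (fst pq - fst t, snd pq - snd t) (x t))
     else 0)"

end

theory Submission
  imports Defs
begin

text \<open>For \<open>r = 0\<close> the bicomplex \<open>C\<^sub>0\<close> is contractible, and a contracting homotopy turns
  every \<open>d\<^sub>0\<close>-cycle of \<open>C\<^sub>0 \<otimes> A\<close> into a \<open>d\<^sub>0\<close>-boundary. For \<open>r \<ge> 1\<close>, take a zigzag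
  \<open>a\<^sub>0, \<dots>, a\<^sub>r\<close> witnessing \<open>a\<^sub>0 \<in> Z\<^sub>r\<^sub>+\<^sub>1(C\<^sub>r \<otimes> A)\<close>. Signed sums of the components of the
  \<open>a\<^sub>j\<close> at the vertices \<open>\<beta>\<^bsub>-k-1,-k\<^esub>\<close> of the staircase, placed at the vertices \<open>\<beta>\<^bsub>-k,-k\<^esub>\<close>,
  define \<open>b\<^sub>0, \<dots>, b\<^sub>r\<close>; reading the zigzag equations at \<open>\<beta>\<^bsub>-k-1,-k\<^esub>\<close> shows that these
  exhibit \<open>a\<^sub>0\<close> as an element of \<open>B\<^sub>r\<^sub>+\<^sub>1\<close>, the telescoping along the staircase leaving
  exactly \<open>a\<^sub>0\<close>. Conversely \<open>B\<^sub>r\<^sub>+\<^sub>1 \<subseteq> Z\<^sub>r\<^sub>+\<^sub>1\<close> in any multicomplex once \<open>r \<ge> 1\<close>, and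
  \<open>C\<^sub>r \<otimes> A\<close> is one.\<close>

lemma sgnd_0_right [simp]: "sgnd i 0 = 0"
  by (simp add: sgnd_def)

lemma sgnd_0_left [simp]: "sgnd 0 x = x"
  by (simp add: sgnd_def)

lemma sgnd_add: "sgnd i (x + y) = sgnd i x + sgnd i y"
  by (simp add: sgnd_def)

lemma sgnd_minus: "sgnd i (- x) = - sgnd i x"
  by (simp add: sgnd_def)

lemma sgnd_sgnd: "sgnd i (sgnd j x) = sgnd (i + j) x"
  by (simp add: sgnd_def)

lemma sgnd_sum: "sgnd i (\<Sum>k\<in>S. f k) = (\<Sum>k\<in>S. sgnd i (f k))"
  by (simp add: sgnd_def sum_negf)

lemma sgnd_apply: "sgnd i f t = sgnd i (f t)"
  by (simp add: sgnd_def)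

lemma sgnd_even: "even i \<Longrightarrow> sgnd i x = x"
  by (simp add: sgnd_def)

lemma sgnd_cong_parity: "even i = even j \<Longrightarrow> sgnd i x = sgnd j x"
  by (simp add: sgnd_def)

lemma sum_apply: "(\<Sum>i\<in>S. (f i :: 'a \<Rightarrow> 'c::comm_monoid_add)) t = (\<Sum>i\<in>S. f i t)"
  by (induct S rule: infinite_finite_induct) auto

lemma sum_atMost_rev: "(\<Sum>j\<le>(s::nat). g j) = (\<Sum>i\<le>s. g (s - i))"
  by (rule sum.reindex_bij_witness[of _ "\<lambda>j. s - j" "\<lambda>j. s - j"]) auto

lemma sum_atMost_add_split_rev:
  "(\<Sum>s\<le>l+i. g s) = (\<Sum>j\<le>l. g (l - j)) + (\<Sum>t<i. (g (Suc l + t) :: 'a::comm_monoid_add))"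
proof -
  have "(\<Sum>s\<le>l+i. g s) = (\<Sum>s\<le>l. g s) + (\<Sum>t<i. g (Suc l + t))"
    by (induct i) (simp_all add: add.assoc)
  then show ?thesis
    by (simp add: sum_atMost_rev[of g l])
qed

lemma sum_atMost_telescope_shifted:
  "(\<Sum>s\<le>(l::nat). (if 1 \<le> s then F (s - 1) else 0) - F s) = - (F l :: 'a::ab_group_add)"
  by (induct l) (simp_all add: algebra_simps)

lemma sum_triangle_atMost:
  "(\<Sum>i\<le>(l::nat). \<Sum>j\<le>l - i. h i j) = (\<Sum>s\<le>l. \<Sum>i\<le>s. (h i (s - i) :: 'a::comm_monoid_add))"
proof -
  have "Sigma {..l} (\<lambda>i. {..l - i}) = {(i, j). i + j \<le> l}"
    by auto
  then have "(\<Sum>i\<le>l. \<Sum>j\<le>l - i. h i j) = (\<Sum>(i, j)\<in>{(i, j). i + j \<le> l}. h i j)"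
    by (simp add: sum.Sigma)
  then show ?thesis
    by (simp add: sum.triangle_reindex_eq)
qed

section \<open>Multicomplexes\<close>

locale bigraded_maps =
  fixes A :: "int \<times> int \<Rightarrow> 'a::ab_group_add set"
    and d :: "nat \<Rightarrow> int \<times> int \<Rightarrow> 'a \<Rightarrow> 'a"
  assumes zero_closed [simp]: "0 \<in> A pq"
    and add_closed: "x \<in> A pq \<Longrightarrow> y \<in> A pq \<Longrightarrow> x + y \<in> A pq"
    and minus_closed: "x \<in> A pq \<Longrightarrow> - x \<in> A pq"
    and d_closed: "x \<in> A pq \<Longrightarrow> d i pq x \<in> A (shift i pq)"
    and d_add: "x \<in> A pq \<Longrightarrow> y \<in> A pq \<Longrightarrow> d i pq (x + y) = d i pq x + d i pq y"
begin

lemma sum_closed: "(\<And>i. i \<in> S \<Longrightarrow> f i \<in> A pq) \<Longrightarrow> sum f S \<in> A pq"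
  by (induct S rule: infinite_finite_induct) (auto intro: add_closed)

lemma sgnd_closed: "x \<in> A pq \<Longrightarrow> sgnd i x \<in> A pq"
  by (simp add: sgnd_def minus_closed)

lemma diff_closed: "x \<in> A pq \<Longrightarrow> y \<in> A pq \<Longrightarrow> x - y \<in> A pq"
  using add_closed minus_closed by (metis diff_conv_add_uminus)

lemma d_zero [simp]: "d i pq 0 = 0"
  using d_add[of 0 pq 0 i] by simp

lemma d_minus: "x \<in> A pq \<Longrightarrow> d i pq (- x) = - d i pq x"
  using d_add[of x pq "- x" i] minus_closed[of x pq] by (simp add: add_eq_0_iff)

lemma d_sgnd: "x \<in> A pq \<Longrightarrow> d i pq (sgnd j x) = sgnd j (d i pq x)"
  by (simp add: sgnd_def d_minus)

lemma d_diff: "x \<in> A pq \<Longrightarrow> y \<in> A pq \<Longrightarrow> d i pq (x - y) = d i pq x - d i pq y"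
  by (metis diff_conv_add_uminus d_add minus_closed d_minus)

lemma d_sum: "(\<And>k. k \<in> S \<Longrightarrow> f k \<in> A pq) \<Longrightarrow> d i pq (sum f S) = (\<Sum>k\<in>S. d i pq (f k))"
proof (induct S rule: infinite_finite_induct)
  case (insert x F)
  then show ?case by (simp add: d_add sum_closed)
qed auto

end

locale bigraded_multicomplex = bigraded_maps +
  assumes structure_eq:
    "x \<in> A pq \<Longrightarrow> (\<Sum>i\<le>l. sgnd i (d i (shift (l - i) pq) (d (l - i) pq x))) = 0"

lemma multicomplex_imp_bigraded_multicomplex:
  assumes "multicomplex scale n A d"
  shows "bigraded_multicomplex A d"
proof -
  interpret module scale
    using assms by (simp add: multicomplex_def)
  have A_subspace: "subspace (A pq)" for pq
    using assms unfolding multicomplex_def by blast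
  show ?thesis
  proof
    fix pq x y i l
    show "0 \<in> A pq" using subspace_0[OF A_subspace] .
    show "x \<in> A pq \<Longrightarrow> y \<in> A pq \<Longrightarrow> x + y \<in> A pq" using subspace_add[OF A_subspace] .
    show "x \<in> A pq \<Longrightarrow> - x \<in> A pq" using subspace_neg[OF A_subspace] .
  qed (use assms in \<open>unfold multicomplex_def, blast+\<close>)
qed

lemma shift_bdeg:
  "i \<le> r \<Longrightarrow> shift (i + j) (bdeg p q (Suc r) (r - i)) = (p - int j, q - int j)"
  by (simp add: shift_def bdeg_def of_nat_diff)

context bigraded_multicomplex
begin

definition boundary_zigzag :: "nat \<Rightarrow> int \<Rightarrow> int \<Rightarrow> (nat \<Rightarrow> 'a) \<Rightarrow> nat \<Rightarrow> 'a" where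
  "boundary_zigzag r p q b j = (\<Sum>i\<le>r. sgnd i (d (i + j) (bdeg p q (Suc r) (r - i)) (b (r - i))))"

lemma boundary_zigzag_closed:
  assumes "\<forall>i\<le>r. b i \<in> A (bdeg p q (Suc r) i)"
  shows "boundary_zigzag r p q b j \<in> A (p - int j, q - int j)"
  unfolding boundary_zigzag_def
  using assms by (intro sum_closed sgnd_closed) (metis atMost_iff d_closed diff_le_self shift_bdeg)

lemma d_boundary_zigzag:
  assumes "\<forall>i\<le>r. b i \<in> A (bdeg p q (Suc r) i)"
  shows "d m (p - int j, q - int j) (boundary_zigzag r p q b j)
       = (\<Sum>i\<le>r. d m (p - int j, q - int j) (sgnd i (d (i + j) (bdeg p q (Suc r) (r - i)) (b (r - i)))))"
  unfolding boundary_zigzag_def using assms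
  by (intro d_sum sgnd_closed) (metis atMost_iff d_closed diff_le_self shift_bdeg)

text \<open>Terms of the structure equations of the \<open>b (r - i)\<close> of total degree beyond \<open>l + i\<close>
  regroup, for each \<open>t < r\<close>, into \<open>d\<^bsub>l+1+t\<^esub>\<close> applied to the boundary condition on \<open>b\<close> at
  level \<open>r - 1 - t\<close>.\<close>
lemma boundary_zigzag_excess_vanishes:
  assumes bA: "\<forall>i\<le>r. b i \<in> A (bdeg p q (Suc r) i)"
    and bcond: "\<forall>l\<le>r-1. (\<Sum>i\<le>l. sgnd i (d i (bdeg p q (Suc r) (l - i)) (b (l - i)))) = 0"
    and t: "t < r"
  shows "(\<Sum>i\<in>{Suc t..r}. sgnd i (sgnd (Suc l + t)
            (d (Suc l + t) (shift (l + i - (Suc l + t)) (bdeg p q (Suc r) (r - i)))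
               (d (l + i - (Suc l + t)) (bdeg p q (Suc r) (r - i)) (b (r - i)))))) = 0"
    (is "(\<Sum>i\<in>_. ?g i) = 0")
proof -
  define B where "B m = bdeg p q (Suc r) m" for m
  define L where "L = r - Suc t"
  have L: "L \<le> r - 1" "Suc t + L = r"
    using t by (auto simp: L_def)
  define W where "W = (p + int r - int L, q + int r - int L)"
  have shift_W: "shift u (B (L - u)) = W" if "u \<le> L" for u
    using that L by (simp add: shift_def B_def bdeg_def W_def of_nat_diff)
  have dW: "d u (B (L - u)) (b (L - u)) \<in> A W" if "u \<le> L" for u
    using d_closed[of "b (L - u)" "B (L - u)" u] bA shift_W[OF that] L by (simp add: B_def)
  have "{0 + Suc t..L + Suc t} = {Suc t..r}"
    using L by auto
  then have "(\<Sum>i\<in>{Suc t..r}. ?g i) = (\<Sum>u\<in>{0..L}. ?g (u + Suc t))"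
    using sum.shift_bounds_cl_nat_ivl[of ?g 0 "Suc t" L] by simp
  also have "\<dots> = (\<Sum>u\<le>L. sgnd (Suc t) (sgnd (Suc l + t)
                      (d (Suc l + t) W (sgnd u (d u (B (L - u)) (b (L - u)))))))"
  proof (intro sum.cong)
    fix u assume u: "u \<in> {..L}"
    have "l + (u + Suc t) - (Suc l + t) = u" "r - (u + Suc t) = L - u"
      using L by auto
    then have "?g (u + Suc t) = sgnd (u + Suc t) (sgnd (Suc l + t)
                 (d (Suc l + t) W (d u (B (L - u)) (b (L - u)))))"
      using u shift_W[of u] by (simp add: B_def)
    also have "\<dots> = sgnd (Suc t) (sgnd (Suc l + t) (d (Suc l + t) W (sgnd u (d u (B (L - u)) (b (L - u))))))"
      using dW u by (simp add: d_sgnd sgnd_sgnd ac_simps)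
    finally show "?g (u + Suc t) = \<dots>" .
  qed (simp add: atLeast0AtMost)
  also have "\<dots> = sgnd (Suc t) (sgnd (Suc l + t)
                    (d (Suc l + t) W (\<Sum>u\<le>L. sgnd u (d u (B (L - u)) (b (L - u))))))"
  proof -
    have "d (Suc l + t) W (\<Sum>u\<le>L. sgnd u (d u (B (L - u)) (b (L - u))))
        = (\<Sum>u\<le>L. d (Suc l + t) W (sgnd u (d u (B (L - u)) (b (L - u)))))"
      using dW by (intro d_sum sgnd_closed) simp
    then show ?thesis
      by (simp add: sgnd_sum)
  qed
  also have "(\<Sum>u\<le>L. sgnd u (d u (B (L - u)) (b (L - u)))) = 0"
    using bcond L by (simp add: B_def)
  finally show ?thesis
    by simp
qed

text \<open>Summing the structure equations of the \<open>b (r - i)\<close> at level \<open>l + i\<close> with sign \<open>(-1)\<^sup>i\<close>,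
  the terms of level at most \<open>l\<close> form the zigzag equation and the remaining ones vanish.\<close>
lemma boundary_zigzag_structure_eq:
  assumes bA: "\<forall>i\<le>r. b i \<in> A (bdeg p q (Suc r) i)"
    and bcond: "\<forall>l\<le>r-1. (\<Sum>i\<le>l. sgnd i (d i (bdeg p q (Suc r) (l - i)) (b (l - i)))) = 0"
  shows "(\<Sum>j\<le>l. sgnd (l - j) (d (l - j) (p - int j, q - int j) (boundary_zigzag r p q b j))) = 0"
proof -
  define B where "B m = bdeg p q (Suc r) m" for m
  have bB: "b (r - i) \<in> A (B (r - i))" for i
    using bA by (simp add: B_def)
  have shift_B: "shift (i + j) (B (r - i)) = (p - int j, q - int j)" if "i \<le> r" for i j
    using shift_bdeg[OF that] by (simp add: B_def)
  have dbA: "d (i + j) (B (r - i)) (b (r - i)) \<in> A (p - int j, q - int j)" if "i \<le> r" for i j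
    using that bB by (metis d_closed shift_B)
  define G where "G i s = sgnd s (d s (shift (l + i - s) (B (r - i)))
                          (d (l + i - s) (B (r - i)) (b (r - i))))" for i s
  have "0 = (\<Sum>i\<le>r. sgnd i (\<Sum>s\<le>l+i. G i s))"
    using structure_eq[OF bB] by (simp add: G_def)
  also have "\<dots> = (\<Sum>i\<le>r. sgnd i (\<Sum>j\<le>l. G i (l - j)))
                 + (\<Sum>i\<le>r. \<Sum>t<i. sgnd i (G i (Suc l + t)))"
    by (simp add: sum_atMost_add_split_rev sgnd_add sgnd_sum sum.distrib)
  also have "(\<Sum>i\<le>r. \<Sum>t<i. sgnd i (G i (Suc l + t))) = 0"
    using boundary_zigzag_excess_vanishes[OF bA bcond]
    by (simp add: sum.nested_swap' G_def B_def)
  also have "(\<Sum>i\<le>r. sgnd i (\<Sum>j\<le>l. G i (l - j)))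
      = (\<Sum>j\<le>l. \<Sum>i\<le>r. sgnd (l - j) (d (l - j) (p - int j, q - int j)
                          (sgnd i (d (i + j) (B (r - i)) (b (r - i))))))"
  proof -
    have "G i (l - j) = sgnd (l - j) (d (l - j) (p - int j, q - int j) (d (i + j) (B (r - i)) (b (r - i))))"
      if "i \<le> r" "j \<le> l" for i j
    proof -
      have "l + i - (l - j) = i + j"
        using that by simp
      then show ?thesis
        using shift_B[OF that(1)] by (simp add: G_def)
    qed
    then have "(\<Sum>i\<le>r. sgnd i (\<Sum>j\<le>l. G i (l - j)))
        = (\<Sum>i\<le>r. \<Sum>j\<le>l. sgnd (l - j) (d (l - j) (p - int j, q - int j)
                          (sgnd i (d (i + j) (B (r - i)) (b (r - i))))))"
      using dbA by (intro sum.cong refl) (simp add: sgnd_sum d_sgnd sgnd_sgnd add.commute)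
    then show ?thesis
      using sum.swap by simp
  qed
  also have "\<dots> = (\<Sum>j\<le>l. sgnd (l - j) (d (l - j) (p - int j, q - int j) (boundary_zigzag r p q b j)))"
    using d_boundary_zigzag[OF bA] by (simp add: sgnd_sum B_def)
  finally show ?thesis
    by simp
qed

lemma Bs_subset_Zs:
  assumes "0 < r"
  shows "Bs A d (Suc r) p q \<subseteq> Zs A d (Suc r) p q"
proof
  fix x assume "x \<in> Bs A d (Suc r) p q"
  then obtain b where x: "x \<in> A (p, q)" and bA: "\<forall>i\<le>r. b i \<in> A (bdeg p q (Suc r) i)"
    and x_eq: "x = (\<Sum>i\<le>r. sgnd i (d i (bdeg p q (Suc r) (r - i)) (b (r - i))))"
    and bcond: "\<forall>l\<le>r-1. (\<Sum>i\<le>l. sgnd i (d i (bdeg p q (Suc r) (l - i)) (b (l - i)))) = 0"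
    using assms unfolding Bs_def by auto
  have "boundary_zigzag r p q b 0 = x"
    by (simp add: boundary_zigzag_def x_eq)
  then show "x \<in> Zs A d (Suc r) p q"
    unfolding Zs_def using x boundary_zigzag_closed[OF bA] boundary_zigzag_structure_eq[OF bA bcond]
    by (auto intro!: exI[of _ "boundary_zigzag r p q b"])
qed

end

section \<open>The staircase bicomplex and the tensor product\<close>

text \<open>For \<open>r > 0\<close> the basis of \<open>C\<^sub>r\<close> consists of the staircase vertices \<open>\<beta>\<^bsub>-k,-k\<^esub>\<close> and
  \<open>\<beta>\<^bsub>-k-1,-k\<^esub>\<close>, \<open>k < r\<close>, indexed here by their bidegrees.\<close>
definition Cdiag :: "nat \<Rightarrow> int \<times> int" where
  "Cdiag k = (- int k, - int k)"

definition Cleft :: "nat \<Rightarrow> int \<times> int" where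
  "Cleft k = (- int k - 1, - int k)"

lemma Cdiag_eq_iff [simp]: "Cdiag k = Cdiag m \<longleftrightarrow> k = m"
  by (simp add: Cdiag_def)

lemma Cleft_eq_iff [simp]: "Cleft k = Cleft m \<longleftrightarrow> k = m"
  by (simp add: Cleft_def)

lemma Cdiag_neq_Cleft [simp]: "Cdiag k \<noteq> Cleft m" "Cleft m \<noteq> Cdiag k"
  by (auto simp: Cdiag_def Cleft_def)

lemma nat_le_pred_iff: "0 \<le> k \<Longrightarrow> k \<le> int r - 1 \<longleftrightarrow> nat k < r"
  by auto

lemma Cbasis_pos_iff:
  assumes "0 < r"
  shows "t \<in> Cbasis r \<longleftrightarrow> (\<exists>k<r. t = Cdiag k) \<or> (\<exists>k<r. t = Cleft k)"
proof
  assume "t \<in> Cbasis r"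
  then obtain k where k: "0 \<le> k" "k \<le> int r - 1" "t = (-k, -k) \<or> t = (-k - 1, -k)"
    using assms by (auto simp: Cbasis_def)
  then show "(\<exists>k<r. t = Cdiag k) \<or> (\<exists>k<r. t = Cleft k)"
    by (metis Cdiag_def Cleft_def int_nat_eq nat_le_pred_iff)
next
  assume "(\<exists>k<r. t = Cdiag k) \<or> (\<exists>k<r. t = Cleft k)"
  then show "t \<in> Cbasis r"
    using assms unfolding Cbasis_def Cdiag_def Cleft_def by force
qed

lemma Cdiag_in_Cbasis: "k < r \<Longrightarrow> Cdiag k \<in> Cbasis r"
  using Cbasis_pos_iff[of r "Cdiag k"] by auto

lemma Cleft_in_Cbasis: "k < r \<Longrightarrow> Cleft k \<in> Cbasis r"
  using Cbasis_pos_iff[of r "Cleft k"] by auto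

lemma Cdiag_notin_Cbasis: "0 < r \<Longrightarrow> r \<le> k \<Longrightarrow> Cdiag k \<notin> Cbasis r"
  using Cbasis_pos_iff[of r "Cdiag k"] by auto

lemma Cleft_notin_Cbasis: "0 < r \<Longrightarrow> r \<le> k \<Longrightarrow> Cleft k \<notin> Cbasis r"
  using Cbasis_pos_iff[of r "Cleft k"] by auto

lemma Cedge_pos_iff:
  assumes "0 < r"
  shows "Cedge r i s \<longleftrightarrow> (i = 1 \<and> (\<exists>k<r. s = Cdiag k)) \<or> (i = 0 \<and> (\<exists>k. 1 \<le> k \<and> k < r \<and> s = Cdiag k))"
proof
  assume "Cedge r i s"
  then obtain k where k: "0 \<le> k" "k \<le> int r - 1" "s = (-k, -k)" "i = 1 \<or> (i = 0 \<and> 1 \<le> k)"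
    using assms unfolding Cedge_def by auto
  then have "s = Cdiag (nat k)" "nat k < r"
    by (auto simp: Cdiag_def)
  then show "(i = 1 \<and> (\<exists>k<r. s = Cdiag k)) \<or> (i = 0 \<and> (\<exists>k. 1 \<le> k \<and> k < r \<and> s = Cdiag k))"
    using k by (metis One_nat_def Suc_leI int_nat_eq nat_mono nat_one_as_int zero_less_nat_eq)
next
  assume "(i = 1 \<and> (\<exists>k<r. s = Cdiag k)) \<or> (i = 0 \<and> (\<exists>k. 1 \<le> k \<and> k < r \<and> s = Cdiag k))"
  then show "Cedge r i s"
    using assms unfolding Cedge_def Cdiag_def by force
qed

lemma TA_memD: "X \<in> TA r A pq \<Longrightarrow> t \<in> Cbasis r \<Longrightarrow> X t \<in> A (fst pq - fst t, snd pq - snd t)"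
  unfolding TA_def by blast

lemma TA_zeroD: "X \<in> TA r A pq \<Longrightarrow> t \<notin> Cbasis r \<Longrightarrow> X t = 0"
  unfolding TA_def by blast

lemma TA_I:
  "(\<And>t. t \<in> Cbasis r \<Longrightarrow> X t \<in> A (fst pq - fst t, snd pq - snd t)) \<Longrightarrow>
   (\<And>t. t \<notin> Cbasis r \<Longrightarrow> X t = 0) \<Longrightarrow> X \<in> TA r A pq"
  unfolding TA_def by blast

lemma TA_Cdiag: "X \<in> TA r A pq \<Longrightarrow> k < r \<Longrightarrow> X (Cdiag k) \<in> A (fst pq + int k, snd pq + int k)"
  using TA_memD[of X r A pq "Cdiag k"] Cdiag_in_Cbasis by (simp add: Cdiag_def)

lemma TA_Cleft: "X \<in> TA r A pq \<Longrightarrow> k < r \<Longrightarrow> X (Cleft k) \<in> A (fst pq + int k + 1, snd pq + int k)"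
  using TA_memD[of X r A pq "Cleft k"] Cleft_in_Cbasis by (simp add: Cleft_def algebra_simps)

lemma Td_outside: "t \<notin> Cbasis r \<Longrightarrow> Td r d i pq X t = 0"
  by (simp add: Td_def)

lemma Td_Cdiag:
  assumes "0 < r" "k < r"
  shows "Td r d i pq X (Cdiag k) = sgnd k (d i (fst pq + int k, snd pq + int k) (X (Cdiag k)))"
proof -
  have "- int i * fst (Cdiag k) + (1 - int i) * snd (Cdiag k) = 2 * (int i * int k) - int k"
    by (simp add: Cdiag_def algebra_simps)
  then have parity: "even (- int i * fst (Cdiag k) + (1 - int i) * snd (Cdiag k)) = even k"
    by simp
  have no_edge: "\<not> Cedge r i (fst (Cdiag k) + int i, snd (Cdiag k) - 1 + int i)"
    using Cedge_pos_iff[OF assms(1)] by (auto simp: Cdiag_def)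
  have "(fst pq - fst (Cdiag k), snd pq - snd (Cdiag k)) = (fst pq + int k, snd pq + int k)"
    by (simp add: Cdiag_def)
  then show ?thesis
    using Cdiag_in_Cbasis[OF assms(2)] no_edge unfolding Td_def Let_def
    by (simp only: if_True if_False parity add_0 flip: sgnd_def)
qed

lemma Td_Cleft:
  assumes r: "0 < r" and k: "k < r"
  shows "Td r d i pq X (Cleft k) = (if i = 1 then X (Cdiag k) else 0)
     + (if i = 0 \<and> Suc k < r then X (Cdiag (Suc k)) else 0)
     + sgnd (i + k) (d i (fst pq + int k + 1, snd pq + int k) (X (Cleft k)))"
proof -
  have edge: "(if Cedge r i (fst (Cleft k) + int i, snd (Cleft k) - 1 + int i)
               then X (fst (Cleft k) + int i, snd (Cleft k) - 1 + int i) else 0)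
     = (if i = 1 then X (Cdiag k) else 0) + (if i = 0 \<and> Suc k < r then X (Cdiag (Suc k)) else 0)"
  proof -
    consider "i = 0" | "i = 1" | "1 < i"
      by linarith
    then show ?thesis
    proof cases
      case 1
      then have "(fst (Cleft k) + int i, snd (Cleft k) - 1 + int i) = Cdiag (Suc k)"
        by (simp add: Cleft_def Cdiag_def)
      then show ?thesis
        using 1 Cedge_pos_iff[OF r, of 0 "Cdiag (Suc k)"] by auto
    next
      case 2
      then have "(fst (Cleft k) + int i, snd (Cleft k) - 1 + int i) = Cdiag k"
        by (simp add: Cleft_def Cdiag_def)
      then show ?thesis
        using 2 k Cedge_pos_iff[OF r, of 1 "Cdiag k"] by auto
    qed (use Cedge_pos_iff[OF r, of i] in auto)
  qed
  have "- int i * fst (Cleft k) + (1 - int i) * snd (Cleft k) = 2 * (int i * int k) + int i - int k"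
    by (simp add: Cleft_def algebra_simps)
  then have parity: "even (- int i * fst (Cleft k) + (1 - int i) * snd (Cleft k)) = even (i + k)"
    by simp
  have "(fst pq - fst (Cleft k), snd pq - snd (Cleft k)) = (fst pq + int k + 1, snd pq + int k)"
    by (simp add: Cleft_def)
  then show ?thesis
    using Cleft_in_Cbasis[OF k] unfolding Td_def Let_def
    by (simp only: if_True edge parity flip: sgnd_def)
qed

lemma (in bigraded_maps) tensor_bigraded_maps: "bigraded_maps (TA r A) (Td r d)"
proof
  fix pq x y i
  show "0 \<in> TA r A pq" "x \<in> TA r A pq \<Longrightarrow> y \<in> TA r A pq \<Longrightarrow> x + y \<in> TA r A pq"
    "x \<in> TA r A pq \<Longrightarrow> - x \<in> TA r A pq"
    by (simp_all add: TA_def add_closed minus_closed)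
  show "Td r d i pq x \<in> TA r A (shift i pq)" if x: "x \<in> TA r A pq"
  proof (rule TA_I)
    fix t assume t: "t \<in> Cbasis r"
    let ?s = "(fst t + int i, snd t - 1 + int i)"
    let ?pq' = "(fst (shift i pq) - fst t, snd (shift i pq) - snd t)"
    have edge: "x ?s \<in> A ?pq'" if "Cedge r i ?s"
    proof -
      have "?s \<in> Cbasis r"
        using that Cedge_pos_iff[of r i ?s] Cdiag_in_Cbasis
        by (cases "r = 0") (auto simp: Cedge_def Cbasis_def)
      moreover have "(fst pq - fst ?s, snd pq - snd ?s) = ?pq'"
        by (simp add: shift_def)
      ultimately show ?thesis
        using TA_memD[OF x] by metis
    qed
    have "d i (fst pq - fst t, snd pq - snd t) (x t) \<in> A ?pq'"
      using d_closed[OF TA_memD[OF x t], of i] by (simp add: shift_def algebra_simps)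
    then show "Td r d i pq x t \<in> A ?pq'"
      unfolding Td_def Let_def using t edge by (auto intro!: add_closed minus_closed diff_closed)
  qed (rule Td_outside)
  show "Td r d i pq (x + y) = Td r d i pq x + Td r d i pq y"
    if "x \<in> TA r A pq" "y \<in> TA r A pq"
  proof
    fix t
    show "Td r d i pq (x + y) t = (Td r d i pq x + Td r d i pq y) t"
      using that TA_memD[of x r A pq t] TA_memD[of y r A pq t]
      by (auto simp: Td_def Let_def d_add)
  qed
qed

context bigraded_multicomplex
begin

lemma tensor_structure_eq_Cdiag:
  assumes r: "0 < r" and X: "X \<in> TA r A pq" and k: "k < r"
  shows "(\<Sum>i\<le>l. sgnd i (Td r d i (shift (l - i) pq) (Td r d (l - i) pq X) (Cdiag k))) = 0"
proof -
  define P where "P = (fst pq + int k, snd pq + int k)"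
  have XP: "X (Cdiag k) \<in> A P"
    unfolding P_def by (rule TA_Cdiag[OF X k])
  have "Td r d i (shift (l - i) pq) (Td r d (l - i) pq X) (Cdiag k)
      = d i (shift (l - i) P) (d (l - i) P (X (Cdiag k)))" for i
  proof -
    have "(fst (shift (l - i) pq) + int k, snd (shift (l - i) pq) + int k) = shift (l - i) P"
      by (simp add: shift_def P_def)
    then have "Td r d i (shift (l - i) pq) (Td r d (l - i) pq X) (Cdiag k)
        = sgnd k (d i (shift (l - i) P) (sgnd k (d (l - i) P (X (Cdiag k)))))"
      by (simp add: Td_Cdiag[OF r k] P_def)
    then show ?thesis
      using d_closed[OF XP] by (simp add: d_sgnd sgnd_sgnd sgnd_even)
  qed
  then show ?thesis
    using structure_eq[OF XP] by simp
qed

lemma Td_Td_Cleft: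
  assumes r: "0 < r" and X: "X \<in> TA r A pq" and k: "k < r"
  defines "P0 \<equiv> (fst pq + int k, snd pq + int k)"
    and "P1 \<equiv> (fst pq + int (Suc k), snd pq + int (Suc k))"
    and "Q \<equiv> (fst pq + int k + 1, snd pq + int k)"
  shows "Td r d i (shift j pq) (Td r d j pq X) (Cleft k)
     = (if i = 1 then sgnd k (d j P0 (X (Cdiag k))) else 0)
       + (if i = 0 \<and> Suc k < r then sgnd (Suc k) (d j P1 (X (Cdiag (Suc k)))) else 0)
       + sgnd (i + k) ((if j = 1 then d i P0 (X (Cdiag k))
                        else if j = 0 \<and> Suc k < r then d i P1 (X (Cdiag (Suc k))) else 0)
                       + sgnd (j + k) (d i (shift j Q) (d j Q (X (Cleft k)))))"
proof -
  define V where "V = (if j = 1 then X (Cdiag k) else if j = 0 \<and> Suc k < r then X (Cdiag (Suc k)) else 0)"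
  have XQ: "X (Cleft k) \<in> A Q"
    unfolding Q_def by (rule TA_Cleft[OF X k])
  have V_closed: "V \<in> A (shift j Q)"
    using TA_Cdiag[OF X k] TA_Cdiag[OF X, of "Suc k"]
    by (auto simp: V_def shift_def Q_def ac_simps)
  have dV: "d i (shift j Q) V
      = (if j = 1 then d i P0 (X (Cdiag k)) else if j = 0 \<and> Suc k < r then d i P1 (X (Cdiag (Suc k))) else 0)"
    by (auto simp: V_def shift_def Q_def P0_def P1_def ac_simps)
  have inner: "Td r d j pq X (Cleft k) = V + sgnd (j + k) (d j Q (X (Cleft k)))"
    unfolding Td_Cleft[OF r k] V_def Q_def by simp
  have "(fst (shift j pq) + int k + 1, snd (shift j pq) + int k) = shift j Q"
    by (simp add: shift_def Q_def)
  then have "Td r d i (shift j pq) (Td r d j pq X) (Cleft k)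
     = (if i = 1 then Td r d j pq X (Cdiag k) else 0)
       + (if i = 0 \<and> Suc k < r then Td r d j pq X (Cdiag (Suc k)) else 0)
       + sgnd (i + k) (d i (shift j Q) (V + sgnd (j + k) (d j Q (X (Cleft k)))))"
    by (subst Td_Cleft[OF r k]) (simp only: inner)
  also have "d i (shift j Q) (V + sgnd (j + k) (d j Q (X (Cleft k))))
     = d i (shift j Q) V + sgnd (j + k) (d i (shift j Q) (d j Q (X (Cleft k))))"
    using V_closed d_closed[OF XQ] by (simp add: d_add sgnd_closed d_sgnd)
  also note dV
  also have "Td r d j pq X (Cdiag k) = sgnd k (d j P0 (X (Cdiag k)))"
    by (simp add: Td_Cdiag[OF r k] P0_def)
  also have "(if i = 0 \<and> Suc k < r then Td r d j pq X (Cdiag (Suc k)) else 0)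
      = (if i = 0 \<and> Suc k < r then sgnd (Suc k) (d j P1 (X (Cdiag (Suc k)))) else 0)"
    by (simp add: Td_Cdiag[OF r] P1_def)
  finally show ?thesis .
qed

lemma tensor_structure_term_Cleft:
  assumes r: "0 < r" and X: "X \<in> TA r A pq" and k: "k < r" and i: "i \<le> l"
  defines "P0 \<equiv> (fst pq + int k, snd pq + int k)"
    and "P1 \<equiv> (fst pq + int (Suc k), snd pq + int (Suc k))"
    and "Q \<equiv> (fst pq + int k + 1, snd pq + int k)"
  shows "sgnd i (Td r d i (shift (l - i) pq) (Td r d (l - i) pq X) (Cleft k))
     = (if i = 1 then - sgnd k (d (l - 1) P0 (X (Cdiag k))) else 0)
     + (if i = 0 then if Suc k < r then - sgnd k (d l P1 (X (Cdiag (Suc k)))) else 0 else 0)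
     + (if i = l - 1 then if 1 \<le> l then sgnd k (d (l - 1) P0 (X (Cdiag k))) else 0 else 0)
     + (if i = l then if Suc k < r then sgnd k (d l P1 (X (Cdiag (Suc k)))) else 0 else 0)
     + sgnd l (sgnd i (d i (shift (l - i) Q) (d (l - i) Q (X (Cleft k)))))"
proof -
  define j where "j = l - i"
  have term1: "sgnd i (if i = 1 then sgnd k (d j P0 (X (Cdiag k))) else 0)
      = (if i = 1 then - sgnd k (d (l - 1) P0 (X (Cdiag k))) else 0)"
    by (simp add: j_def sgnd_def)
  have term2: "sgnd i (if i = 0 \<and> Suc k < r then sgnd (Suc k) (d j P1 (X (Cdiag (Suc k)))) else 0)
      = (if i = 0 then if Suc k < r then - sgnd k (d l P1 (X (Cdiag (Suc k)))) else 0 else 0)"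
    by (simp add: j_def sgnd_def)
  have term3: "sgnd i (sgnd (i + k) (if j = 1 then d i P0 (X (Cdiag k))
                        else if j = 0 \<and> Suc k < r then d i P1 (X (Cdiag (Suc k))) else 0))
      = (if i = l - 1 then if 1 \<le> l then sgnd k (d (l - 1) P0 (X (Cdiag k))) else 0 else 0)
        + (if i = l then if Suc k < r then sgnd k (d l P1 (X (Cdiag (Suc k)))) else 0 else 0)"
    using i by (cases "i = l") (auto simp: j_def sgnd_sgnd sgnd_def)
  have term4: "sgnd i (sgnd (i + k) (sgnd (j + k) y)) = sgnd l (sgnd i y)" for y
    unfolding sgnd_sgnd using i by (intro sgnd_cong_parity) (auto simp: j_def)
  show ?thesis
    unfolding j_def[symmetric] Td_Td_Cleft[OF r X k, of i j, folded P0_def P1_def Q_def]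
      sgnd_add term1 term2 term3 term4
    by (simp only: add.assoc)
qed

lemma tensor_structure_eq_Cleft:
  assumes r: "0 < r" and X: "X \<in> TA r A pq" and k: "k < r"
  shows "(\<Sum>i\<le>l. sgnd i (Td r d i (shift (l - i) pq) (Td r d (l - i) pq X) (Cleft k))) = 0"
proof -
  define Q where "Q = (fst pq + int k + 1, snd pq + int k)"
  have "X (Cleft k) \<in> A Q"
    unfolding Q_def by (rule TA_Cleft[OF X k])
  then have "(\<Sum>i\<le>l. sgnd l (sgnd i (d i (shift (l - i) Q) (d (l - i) Q (X (Cleft k)))))) = 0"
    using structure_eq by (simp flip: sgnd_sum)
  then show ?thesis
    using tensor_structure_term_Cleft[OF r X k] by (simp add: sum.distrib Q_def)
qed

lemma tensor_bigraded_multicomplex: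
  assumes r: "0 < r"
  shows "bigraded_multicomplex (TA r A) (Td r d)"
proof -
  interpret tensor: bigraded_maps "TA r A" "Td r d"
    by (rule tensor_bigraded_maps)
  show ?thesis
  proof
    fix X pq l assume X: "X \<in> TA r A pq"
    show "(\<Sum>i\<le>l. sgnd i (Td r d i (shift (l - i) pq) (Td r d (l - i) pq X))) = 0"
    proof
      fix t
      show "(\<Sum>i\<le>l. sgnd i (Td r d i (shift (l - i) pq) (Td r d (l - i) pq X))) t = 0 t"
      proof (cases "t \<in> Cbasis r")
        case True
        then consider k where "k < r" "t = Cdiag k" | k where "k < r" "t = Cleft k"
          using Cbasis_pos_iff[OF r] by blast
        then show ?thesis
          using tensor_structure_eq_Cdiag[OF r X] tensor_structure_eq_Cleft[OF r X]
          by cases (simp_all add: sum_apply sgnd_apply)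
      qed (simp add: sum_apply sgnd_apply Td_outside)
    qed
  qed
qed

end

section \<open>The case \<open>r = 0\<close>\<close>

lemma Cbasis_0_iff: "t \<in> Cbasis 0 \<longleftrightarrow> t = (0,0) \<or> t = (0,1) \<or> t = (-1,0) \<or> t = (-1,1)"
  by (simp add: Cbasis_def)

lemma Td_0_0:
  "Td 0 d 0 pq X (0,0) = d 0 pq (X (0,0))"
  "Td 0 d 0 pq X (0,1) = X (0,0) - d 0 (fst pq, snd pq - 1) (X (0,1))"
  "Td 0 d 0 pq X (-1,0) = d 0 (fst pq + 1, snd pq) (X (-1,0))"
  "Td 0 d 0 pq X (-1,1) = X (-1,0) - d 0 (fst pq + 1, snd pq - 1) (X (-1,1))"
  by (simp_all add: Td_def Cbasis_def Cedge_def)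

lemma TA_0_memD:
  assumes "X \<in> TA 0 A (p, q)"
  shows "X (0,0) \<in> A (p, q)" "X (0,1) \<in> A (p, q - 1)"
    "X (-1,0) \<in> A (p + 1, q)" "X (-1,1) \<in> A (p + 1, q - 1)"
  using TA_memD[OF assms, of "(0,0)"] TA_memD[OF assms, of "(0,1)"]
    TA_memD[OF assms, of "(-1,0)"] TA_memD[OF assms, of "(-1,1)"]
  by (simp_all add: Cbasis_0_iff)

context bigraded_multicomplex
begin

lemma d0_d0: "x \<in> A (p, q - 1) \<Longrightarrow> d 0 (p, q) (d 0 (p, q - 1) x) = 0"
  using structure_eq[of x "(p, q - 1)" 0] by (simp add: shift_def)

lemma tensor_0_d0_d0:
  assumes X: "X \<in> TA 0 A (p, q - 1)"
  shows "Td 0 d 0 (p, q) (Td 0 d 0 (p, q - 1) X) = 0"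
proof
  fix t
  note X_mem = TA_0_memD[OF X]
  have d_mem: "d 0 (p, q - 2) (X (0,1)) \<in> A (p, q - 1)"
    "d 0 (p + 1, q - 2) (X (-1,1)) \<in> A (p + 1, q - 1)"
    using d_closed[OF X_mem(2), of 0] d_closed[OF X_mem(4), of 0] by (simp_all add: shift_def)
  have "t \<notin> Cbasis 0 \<or> t = (0,0) \<or> t = (0,1) \<or> t = (-1,0) \<or> t = (-1,1)"
    by (auto simp: Cbasis_0_iff)
  then show "Td 0 d 0 (p, q) (Td 0 d 0 (p, q - 1) X) t = 0 t"
    using X_mem d_mem d0_d0[OF X_mem(1)] d0_d0[OF X_mem(2)] d0_d0[OF X_mem(3)] d0_d0[OF X_mem(4)]
    by (auto simp: Td_0_0 Td_outside d_diff)
qed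

lemma tensor_0_cycle_is_boundary:
  assumes x: "x \<in> TA 0 A (p, q)" and cycle: "Td 0 d 0 (p, q) x = 0"
  shows "x = Td 0 d 0 (p, q - 1) (\<lambda>t. if t = (0,0) then x (0,1) else if t = (-1,0) then x (-1,1) else 0)"
    (is "x = Td 0 d 0 _ ?b")
proof
  fix t
  have "t \<notin> Cbasis 0 \<or> t = (0,0) \<or> t = (0,1) \<or> t = (-1,0) \<or> t = (-1,1)"
    by (auto simp: Cbasis_0_iff)
  then show "x t = Td 0 d 0 (p, q - 1) ?b t"
    using TA_zeroD[OF x, of t] fun_cong[OF cycle, of "(0,1)"] fun_cong[OF cycle, of "(-1,1)"]
    by (auto simp: Td_0_0 Td_outside)
qed

lemma tensor_0_E1_vanishes: "E_vanishes (TA 0 A) (Td 0 d) 1"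
  unfolding E_vanishes_def
proof (intro allI set_eqI iffI)
  fix p q x
  assume "x \<in> Zs (TA 0 A) (Td 0 d) 1 p q"
  then have x: "x \<in> TA 0 A (p, q)" and cycle: "Td 0 d 0 (p, q) x = 0"
    unfolding Zs_def by auto
  let ?b = "\<lambda>t. if t = (0,0) then x (0,1) else if t = (-1,0) then x (-1,1) else 0"
  have "?b \<in> TA 0 A (p, q - 1)"
    using TA_0_memD[OF x] by (intro TA_I) (auto simp: Cbasis_0_iff)
  then show "x \<in> Bs (TA 0 A) (Td 0 d) 1 p q"
    unfolding Bs_def using x tensor_0_cycle_is_boundary[OF x cycle] by auto
next
  fix p q x
  assume "x \<in> Bs (TA 0 A) (Td 0 d) 1 p q"
  then obtain b where x: "x \<in> TA 0 A (p, q)" and b: "b \<in> TA 0 A (p, q - 1)"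
    and x_eq: "x = Td 0 d 0 (p, q - 1) b"
    unfolding Bs_def by auto
  then show "x \<in> Zs (TA 0 A) (Td 0 d) 1 p q"
    unfolding Zs_def using tensor_0_d0_d0[OF b] by (auto intro!: exI[of _ "\<lambda>_. x"])
qed

end

section \<open>Zigzags in \<open>C\<^sub>r \<otimes> A\<close>\<close>

locale tensor_zigzag = bigraded_multicomplex A d
  for A :: "int \<times> int \<Rightarrow> 'a::ab_group_add set" and d +
  fixes r :: nat and p q :: int and a :: "nat \<Rightarrow> int \<times> int \<Rightarrow> 'a"
  assumes r_pos: "0 < r"
    and zigzag_mem: "j \<le> r \<Longrightarrow> a j \<in> TA r A (p - int j, q - int j)"
    and zigzag_eq: "l \<le> r \<Longrightarrow> (\<Sum>j\<le>l. sgnd (l - j) (Td r d (l - j) (p - int j, q - int j) (a j))) = 0"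
begin

lemma zigzag_Cleft_mem: "j \<le> r \<Longrightarrow> a j (Cleft K) \<in> A (p - int j + int K + 1, q - int j + int K)"
  using TA_Cleft[OF zigzag_mem, of j K] TA_zeroD[OF zigzag_mem Cleft_notin_Cbasis[OF r_pos], of j K]
  by (cases "K < r") auto

lemma zigzag_Cleft_beyond: "j \<le> r \<Longrightarrow> r \<le> K \<Longrightarrow> a j (Cleft K) = 0"
  using TA_zeroD[OF zigzag_mem Cleft_notin_Cbasis[OF r_pos]] .

lemma zigzag_Cdiag_beyond: "j \<le> r \<Longrightarrow> r \<le> K \<Longrightarrow> a j (Cdiag K) = 0"
  using TA_zeroD[OF zigzag_mem Cdiag_notin_Cbasis[OF r_pos]] .

lemma zigzag_eq_Cleft:
  assumes s: "s \<le> r"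
  shows "(\<Sum>i\<le>s. d i (p - int (s - i) + int K + 1, q - int (s - i) + int K) (a (s - i) (Cleft K)))
       = sgnd K ((if 1 \<le> s then a (s - 1) (Cdiag K) else 0) - a s (Cdiag (Suc K)))"
proof (cases "K < r")
  case False
  then show ?thesis
    using s zigzag_Cleft_beyond zigzag_Cdiag_beyond by simp
next
  case K: True
  define Z where "Z = (\<Sum>j\<le>s. d (s - j) (p - int j + int K + 1, q - int j + int K) (a j (Cleft K)))"
  have "0 = (\<Sum>j\<le>s. sgnd (s - j) (Td r d (s - j) (p - int j, q - int j) (a j) (Cleft K)))"
    using fun_cong[OF zigzag_eq[OF s], of "Cleft K"] by (simp add: sum_apply sgnd_apply)
  also have "\<dots> = (\<Sum>j\<le>s. (if j = s - 1 then if 1 \<le> s then - a (s - 1) (Cdiag K) else 0 else 0)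
          + (if j = s then if Suc K < r then a s (Cdiag (Suc K)) else 0 else 0)
          + sgnd K (d (s - j) (p - int j + int K + 1, q - int j + int K) (a j (Cleft K))))"
    by (intro sum.cong refl) (auto simp: Td_Cleft[OF r_pos K] sgnd_def Suc_le_eq)
  also have "\<dots> = (if 1 \<le> s then - a (s - 1) (Cdiag K) else 0) + a s (Cdiag (Suc K)) + sgnd K Z"
    using zigzag_Cdiag_beyond[OF s, of "Suc K"]
    by (simp add: sum.distrib sgnd_sum Z_def not_less_eq)
  finally have "sgnd K Z = (if 1 \<le> s then a (s - 1) (Cdiag K) else 0) - a s (Cdiag (Suc K))"
    by (simp add: eq_neg_iff_add_eq_0 algebra_simps split: if_splits)
  then have "Z = sgnd K ((if 1 \<le> s then a (s - 1) (Cdiag K) else 0) - a s (Cdiag (Suc K)))"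
    by (metis sgnd_sgnd sgnd_even even_add)
  moreover have "(\<Sum>i\<le>s. d i (p - int (s - i) + int K + 1, q - int (s - i) + int K) (a (s - i) (Cleft K))) = Z"
    unfolding Z_def by (subst sum_atMost_rev) simp
  ultimately show ?thesis
    by simp
qed

text \<open>Omitting the term \<open>j = 0\<close> at \<open>m = r\<close> is what makes the top boundary of the lift
  reproduce \<open>a\<^sub>0\<close> instead of cancelling it.\<close>
definition lift_coeff :: "nat \<Rightarrow> nat \<Rightarrow> 'a" where
  "lift_coeff m k =
     - (\<Sum>j\<le>m. if m = r \<and> j = 0 then 0 else sgnd j (a j (Cleft (k + j + r - Suc m))))"

definition lift :: "nat \<Rightarrow> int \<times> int \<Rightarrow> 'a" where
  "lift m t = (if \<exists>k<r. t = Cdiag k then lift_coeff m (nat (- fst t)) else 0)"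

lemma lift_Cdiag [simp]: "k < r \<Longrightarrow> lift m (Cdiag k) = lift_coeff m k"
  by (auto simp: lift_def Cdiag_def)

lemma lift_Cleft [simp]: "lift m (Cleft k) = 0"
  by (auto simp: lift_def)

lemma lift_outside: "t \<notin> Cbasis r \<Longrightarrow> lift m t = 0"
  using Cdiag_in_Cbasis by (auto simp: lift_def)

lemma zigzag_Cleft_mem_lift_deg:
  assumes "m \<le> r" "j \<le> m" "\<not> (m = r \<and> j = 0)"
  shows "a j (Cleft (k + j + r - Suc m)) \<in> A (p + int r - int m + int k, q + int r - 1 - int m + int k)"
proof -
  have "Suc m \<le> k + j + r"
    using assms by auto
  then have deg: "(p - int j + int (k + j + r - Suc m) + 1, q - int j + int (k + j + r - Suc m))
      = (p + int r - int m + int k, q + int r - 1 - int m + int k)"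
    by (simp add: of_nat_diff)
  have "j \<le> r"
    using assms by simp
  then show ?thesis
    using zigzag_Cleft_mem[of j "k + j + r - Suc m"] unfolding deg by blast
qed

lemma lift_coeff_mem:
  "m \<le> r \<Longrightarrow> lift_coeff m k \<in> A (p + int r - int m + int k, q + int r - 1 - int m + int k)"
  unfolding lift_coeff_def using zigzag_Cleft_mem_lift_deg
  by (intro minus_closed sum_closed) (auto intro: sgnd_closed)

lemma lift_coeff_beyond: "m \<le> r \<Longrightarrow> r \<le> k \<Longrightarrow> lift_coeff m k = 0"
  unfolding lift_coeff_def by (auto intro!: sum.neutral simp: zigzag_Cleft_beyond)

lemma lift_mem: "m \<le> r \<Longrightarrow> lift m \<in> TA r A (bdeg p q (Suc r) m)"
proof (rule TA_I)
  fix t assume "m \<le> r" "t \<in> Cbasis r"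
  then consider k where "k < r" "t = Cdiag k" | k where "k < r" "t = Cleft k"
    using Cbasis_pos_iff[OF r_pos] by blast
  then show "lift m t \<in> A (fst (bdeg p q (Suc r) m) - fst t, snd (bdeg p q (Suc r) m) - snd t)"
  proof cases
    case 1
    have "(fst (bdeg p q (Suc r) m) - fst t, snd (bdeg p q (Suc r) m) - snd t)
        = (p + int r - int m + int k, q + int r - 1 - int m + int k)"
      using 1 by (simp add: bdeg_def Cdiag_def)
    then show ?thesis
      using 1 lift_coeff_mem[OF \<open>m \<le> r\<close>] by simp
  qed simp
qed (rule lift_outside)

lemma lift_coeff_recurrence:
  assumes l: "l \<le> r"
  shows "(if 1 \<le> l then - lift_coeff (l - 1) k else 0) + lift_coeff l (Suc k)
       = (if l = r then a 0 (Cleft k) else 0)"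
proof (cases l)
  case 0
  then show ?thesis
    using r_pos zigzag_Cleft_beyond[of 0 "k + r"] by (simp add: lift_coeff_def)
next
  case (Suc m)
  define g where "g j = sgnd j (a j (Cleft (k + j + r - Suc m)))" for j
  have "lift_coeff m k = - (\<Sum>j\<le>m. g j)"
    using Suc l by (simp add: lift_coeff_def g_def)
  moreover have "g (Suc m) = 0"
    using zigzag_Cleft_beyond[of "Suc m" "k + r"] Suc l by (simp add: g_def)
  moreover have "lift_coeff l (Suc k) = - (\<Sum>j\<le>Suc m. if Suc m = r \<and> j = 0 then 0 else g j)"
  proof -
    have "Suc k + j + r - Suc (Suc m) = k + j + r - Suc m" for j
      by simp
    then show ?thesis
      unfolding Suc lift_coeff_def g_def by presburger
  qed
  moreover have "(\<Sum>j\<le>Suc m. if j = 0 then 0 else g j) = (\<Sum>j\<le>Suc m. g j) - g 0"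
    by (simp add: sum.atMost_shift)
  ultimately show ?thesis
    using Suc by (cases "Suc m = r") (auto simp: g_def)
qed

definition lift_boundary :: "nat \<Rightarrow> int \<times> int \<Rightarrow> 'a" where
  "lift_boundary l = (\<Sum>i\<le>l. sgnd i (Td r d i (bdeg p q (Suc r) (l - i)) (lift (l - i))))"

lemma lift_boundary_apply:
  "lift_boundary l t = (\<Sum>i\<le>l. sgnd i (Td r d i (bdeg p q (Suc r) (l - i)) (lift (l - i)) t))"
  by (simp add: lift_boundary_def sum_apply sgnd_apply)

lemma lift_boundary_Cleft:
  assumes l: "l \<le> r" and k: "k < r"
  shows "lift_boundary l (Cleft k) = (if l = r then a 0 (Cleft k) else 0)"
proof -
  have "lift_boundary l (Cleft k)
      = (\<Sum>i\<le>l. (if i = 1 then if 1 \<le> l then - lift_coeff (l - 1) k else 0 else 0)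
                + (if i = 0 then if Suc k < r then lift_coeff l (Suc k) else 0 else 0))"
    unfolding lift_boundary_apply
    by (intro sum.cong refl) (auto simp: Td_Cleft[OF r_pos k] k sgnd_def Suc_le_eq)
  also have "\<dots> = (if 1 \<le> l then - lift_coeff (l - 1) k else 0) + lift_coeff l (Suc k)"
    using lift_coeff_beyond[OF l, of "Suc k"] k by (simp add: sum.distrib not_less_eq)
  finally show ?thesis
    using lift_coeff_recurrence[OF l] by simp
qed

definition lift_boundary_summand :: "nat \<Rightarrow> nat \<Rightarrow> nat \<Rightarrow> nat \<Rightarrow> 'a" where
  "lift_boundary_summand l k i j =
     (if l - i = r \<and> j = 0 then 0
      else sgnd j (d i (p + int r - int (l - i) + int k, q + int r - 1 - int (l - i) + int k)
                     (a j (Cleft (k + j + r - Suc (l - i))))))"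

lemma lift_boundary_Cdiag_term:
  assumes l: "l \<le> r" and k: "k < r" and i: "i \<le> l"
  shows "sgnd i (Td r d i (bdeg p q (Suc r) (l - i)) (lift (l - i)) (Cdiag k))
       = - sgnd k (\<Sum>j\<le>l - i. sgnd i (lift_boundary_summand l k i j))"
proof -
  define P where "P = (p + int r - int (l - i) + int k, q + int r - 1 - int (l - i) + int k)"
  define c where "c j = (if l - i = r \<and> j = 0 then 0 else sgnd j (a j (Cleft (k + j + r - Suc (l - i)))))" for j
  have c_mem: "c j \<in> A P" if "j \<in> {..l - i}" for j
    unfolding c_def P_def using zigzag_Cleft_mem_lift_deg[of "l - i" j k] l that by (auto intro: sgnd_closed)
  have "d i P (lift_coeff (l - i) k) = - d i P (\<Sum>j\<le>l - i. c j)"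
    unfolding lift_coeff_def c_def[symmetric] by (rule d_minus[OF sum_closed[OF c_mem]])
  also have "d i P (\<Sum>j\<le>l - i. c j) = (\<Sum>j\<le>l - i. d i P (c j))"
    by (rule d_sum[OF c_mem])
  also have "(\<Sum>j\<le>l - i. d i P (c j)) = (\<Sum>j\<le>l - i. lift_boundary_summand l k i j)"
  proof (intro sum.cong refl)
    fix j assume "j \<in> {..l - i}"
    then have "a j (Cleft (k + j + r - Suc (l - i))) \<in> A P" if "\<not> (l - i = r \<and> j = 0)"
      unfolding P_def using zigzag_Cleft_mem_lift_deg[of "l - i" j k] l that by simp
    then show "d i P (c j) = lift_boundary_summand l k i j"
      by (auto simp: c_def lift_boundary_summand_def P_def d_sgnd)
  qed
  finally have "d i P (lift_coeff (l - i) k) = - (\<Sum>j\<le>l - i. lift_boundary_summand l k i j)" .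
  moreover have "(fst (bdeg p q (Suc r) (l - i)) + int k, snd (bdeg p q (Suc r) (l - i)) + int k) = P"
    by (simp add: bdeg_def P_def)
  ultimately show ?thesis
    by (simp add: Td_Cdiag[OF r_pos k] k sgnd_sgnd sgnd_minus sgnd_sum add.commute)
qed

lemma lift_boundary_summand_antidiagonal:
  assumes l: "l \<le> r" and s: "s \<le> l"
  shows "(\<Sum>i\<le>s. sgnd i (lift_boundary_summand l k i (s - i)))
       = (if l = r \<and> s = 0 then 0
          else sgnd (Suc (k + r + l)) ((if 1 \<le> s then a (s - 1) (Cdiag (k + (s - 1) + r - l)) else 0)
                                      - a s (Cdiag (k + s + r - l))))"
proof (cases "l = r \<and> s = 0")
  case True
  then show ?thesis
    by (simp add: lift_boundary_summand_def)
next
  case False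
  then have le: "Suc l \<le> k + s + r"
    using l s by auto
  define K where "K = k + s + r - Suc l"
  have "(\<Sum>i\<le>s. sgnd i (lift_boundary_summand l k i (s - i)))
      = sgnd s (\<Sum>i\<le>s. d i (p - int (s - i) + int K + 1, q - int (s - i) + int K) (a (s - i) (Cleft K)))"
    unfolding sgnd_sum
  proof (intro sum.cong refl)
    fix i assume i: "i \<in> {..s}"
    have nonzero: "\<not> (l - i = r \<and> s - i = 0)"
      and index: "k + (s - i) + r - Suc (l - i) = K" and sum_s: "i + (s - i) = s"
      using False i s l le by (auto simp: K_def)
    have deg: "(p + int r - int (l - i) + int k, q + int r - 1 - int (l - i) + int k)
        = (p - int (s - i) + int K + 1, q - int (s - i) + int K)"
      using i s le l by (simp add: K_def of_nat_diff)
    show "sgnd i (lift_boundary_summand l k i (s - i))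
        = sgnd s (d i (p - int (s - i) + int K + 1, q - int (s - i) + int K) (a (s - i) (Cleft K)))"
      unfolding lift_boundary_summand_def if_not_P[OF nonzero] index deg sgnd_sgnd sum_s ..
  qed
  also have "\<dots> = sgnd s (sgnd K ((if 1 \<le> s then a (s - 1) (Cdiag K) else 0) - a s (Cdiag (Suc K))))"
    using zigzag_eq_Cleft[of s K] s l by simp
  also have "\<dots> = sgnd (Suc (k + r + l)) ((if 1 \<le> s then a (s - 1) (Cdiag (k + (s - 1) + r - l)) else 0)
                                      - a s (Cdiag (k + s + r - l)))"
  proof -
    have "even (s + K) = even (Suc (k + r + l))"
      using le unfolding K_def by presburger
    moreover have "s \<ge> 1 \<Longrightarrow> K = k + (s - 1) + r - l" "Suc K = k + s + r - l"
      using le by (auto simp: K_def)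
    ultimately show ?thesis
      by (auto simp: sgnd_sgnd intro: sgnd_cong_parity)
  qed
  finally show ?thesis
    using False by (simp only: if_False)
qed

lemma lift_boundary_Cdiag:
  assumes l: "l \<le> r" and k: "k < r"
  shows "lift_boundary l (Cdiag k) = (if l = r then a 0 (Cdiag k) else 0)"
proof -
  define F where "F s = a s (Cdiag (k + s + r - l))" for s
  define c where "c = Suc (k + r + l)"
  define D where "D s = (if 1 \<le> s then F (s - 1) else 0) - F s" for s
  have "lift_boundary l (Cdiag k)
      = - sgnd k (\<Sum>i\<le>l. \<Sum>j\<le>l - i. sgnd i (lift_boundary_summand l k i j))"
    unfolding lift_boundary_apply using lift_boundary_Cdiag_term[OF l k]
    by (simp add: sgnd_sum sum_negf)
  also have "\<dots> = - sgnd k (\<Sum>s\<le>l. \<Sum>i\<le>s. sgnd i (lift_boundary_summand l k i (s - i)))"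
    by (simp only: sum_triangle_atMost)
  also have "\<dots> = - sgnd k (\<Sum>s\<le>l. if l = r \<and> s = 0 then 0 else sgnd c (D s))"
    unfolding c_def D_def F_def using lift_boundary_summand_antidiagonal[OF l] by simp
  also have "\<dots> = (if l = r then F 0 else 0)"
  proof -
    have "F l = 0"
      using zigzag_Cdiag_beyond[of l "k + r"] l by (simp add: F_def)
    then have telescope: "(\<Sum>s\<le>l. D s) = 0"
      unfolding D_def sum_atMost_telescope_shifted by simp
    have "(\<Sum>s\<le>l. if l = r \<and> s = 0 then 0 else sgnd c (D s))
        = sgnd c ((\<Sum>s\<le>l. D s) - (if l = r then D 0 else 0))"
      by (simp add: sgnd_sum sum.atMost_shift sgnd_add sgnd_minus)
    also have "\<dots> = (if l = r then sgnd c (F 0) else 0)"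
      unfolding telescope by (simp add: D_def sgnd_minus)
    finally show ?thesis
      by (simp add: sgnd_sgnd sgnd_def c_def)
  qed
  finally show ?thesis
    using l by (simp add: F_def)
qed

lemma lift_boundary_eq: "l \<le> r \<Longrightarrow> lift_boundary l = (if l = r then a 0 else 0)"
proof
  fix t assume l: "l \<le> r"
  show "lift_boundary l t = (if l = r then a 0 else 0) t"
  proof (cases "t \<in> Cbasis r")
    case True
    then consider k where "k < r" "t = Cdiag k" | k where "k < r" "t = Cleft k"
      using Cbasis_pos_iff[OF r_pos] by blast
    then show ?thesis
      by cases (simp_all add: lift_boundary_Cdiag[OF l] lift_boundary_Cleft[OF l])
  next
    case False
    then show ?thesis
      using TA_zeroD[OF zigzag_mem[of 0]] by (simp add: lift_boundary_apply Td_outside)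
  qed
qed

lemma zigzag_start_in_Bs: "a 0 \<in> Bs (TA r A) (Td r d) (Suc r) p q"
proof -
  have "lift_boundary l = 0" if "l \<le> r - 1" for l
  proof -
    have "l \<le> r" "l \<noteq> r"
      using r_pos that by arith+
    then show ?thesis
      using lift_boundary_eq[of l] by simp
  qed
  then show ?thesis
    unfolding Bs_def using r_pos zigzag_mem[of 0] lift_mem lift_boundary_eq[of r]
    by (auto simp: lift_boundary_def intro!: exI[of _ lift])
qed

end

lemma (in bigraded_multicomplex) tensor_Zs_subset_Bs:
  assumes r: "0 < r"
  shows "Zs (TA r A) (Td r d) (Suc r) p q \<subseteq> Bs (TA r A) (Td r d) (Suc r) p q"
proof
  fix x assume "x \<in> Zs (TA r A) (Td r d) (Suc r) p q"
  then obtain a where x: "x \<in> TA r A (p, q)" and a0: "a 0 = x"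
    and a_mem: "\<forall>j\<in>{1..r}. a j \<in> TA r A (p - int j, q - int j)"
    and a_eq: "\<forall>l\<le>r. (\<Sum>j\<le>l. sgnd (l - j) (Td r d (l - j) (p - int j, q - int j) (a j))) = 0"
    unfolding Zs_def by auto
  have "tensor_zigzag A d r p q a"
  proof
    show "a j \<in> TA r A (p - int j, q - int j)" if "j \<le> r" for j
      using that x a0 a_mem by (cases "j = 0") auto
  qed (use r a_eq in auto)
  then show "x \<in> Bs (TA r A) (Td r d) (Suc r) p q"
    using tensor_zigzag.zigzag_start_in_Bs a0 by blast
qed

theorem mainTheorem5:
  fixes scale :: "'r::comm_ring_1 \<Rightarrow> 'b::ab_group_add \<Rightarrow> 'b"
    and n :: enat
    and A :: "int \<times> int \<Rightarrow> 'b set"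
    and d :: "nat \<Rightarrow> int \<times> int \<Rightarrow> 'b \<Rightarrow> 'b"
    and r :: nat
  assumes "2 \<le> n"
    and "multicomplex scale n A d"
  shows "E_vanishes (TA r A) (Td r d) (Suc r)"
proof -
  interpret bigraded_multicomplex A d
    using assms(2) by (rule multicomplex_imp_bigraded_multicomplex)
  show ?thesis
  proof (cases "r = 0")
    case True
    then show ?thesis
      using tensor_0_E1_vanishes by simp
  next
    case False
    then interpret tensor: bigraded_multicomplex "TA r A" "Td r d"
      by (simp add: tensor_bigraded_multicomplex)
    show ?thesis
      unfolding E_vanishes_def using False tensor_Zs_subset_Bs tensor.Bs_subset_Zs by blast
  qed
qed

end
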